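(* Let $\eta:\mathbb{R}\to\mathbb{R}$ be defined by $\eta(x)=\frac32(1-|x|)^2$ for $|x|\le 1$ and $\eta(x)=0$ for $|x|>1$, so that $\hat\eta(k)=\frac{6}{k^3}(k-\sin k)$ for $k\neq 0$ and $\hat\eta(0)=1$. Then for all $k\in\mathbb{R}$, $$\frac{1}{1+\beta k^2}\le \hat\eta(k)\le \frac{1}{1+\alpha k^2},\qquad \alpha=\tfrac{1}{20},\ \beta=\tfrac{7}{40}.$$
   Context: The Fourier transform is $\hat f(k)=\int_{\mathbb{R}} e^{-ikx}f(x)\,\mathrm{d}x$. *)

theory Defs
  imports "HOL-Analysis.Analysis"
begin

definition fourier :: "(real \<Rightarrow> real) \<Rightarrow> real \<Rightarrow> complex" where
  "fourier f k = (LINT x|lborel. exp (- \<i> * complex_of_real (k * x)) * complex_of_real (f x))"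

definition eta :: "real \<Rightarrow> real" where
  "eta x = (if \<bar>x\<bar> \<le> 1 then 3/2 * (1 - \<bar>x\<bar>)^2 else 0)"

end

theory Submission
  imports Defs
begin

text \<open>An explicit antiderivative of \<open>exp (c x) \<eta>(x)\<close> on each half of \<open>[-1, 1]\<close> gives the
  transform \<open>6 (k - sin k) / k\<^sup>3\<close>, an even function of \<open>k\<close>. For \<open>k > 0\<close> each bound becomes a
  polynomial inequality in \<open>k\<close> once \<open>sin k\<close> is replaced by an estimate: an alternating Taylor
  bound for small \<open>k\<close>, \<open>\<bar>sin k\<bar> \<le> 1\<close> for large \<open>k\<close>, and, for the lower bound on \<open>[8.2, 11.5]\<close>
  where \<open>sin k \<le> 1\<close> is too weak, \<open>sin k \<le> 0.96\<close>.\<close>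

lemma has_real_derivative_power_sum:
  fixes c :: "nat \<Rightarrow> real"
  shows "((\<lambda>x. \<Sum>m<Suc n. c m * x^m) has_real_derivative (\<Sum>m<n. diffs c m * x^m)) (at x)"
proof (induction n)
  case 0
  then show ?case by simp
next
  case (Suc n)
  have "((\<lambda>x. c (Suc n) * x ^ Suc n) has_real_derivative diffs c n * x^n) (at x)"
    using DERIV_cmult[OF DERIV_pow[of "Suc n"], of "c (Suc n)"] by (simp add: diffs_def mult_ac)
  from DERIV_add[OF Suc this] show ?case by simp
qed

lemma sin_cos_alternating_taylor_bounds:
  fixes x :: real
  assumes "0 \<le> x"
  shows "0 \<le> (-1)^n * ((\<Sum>m<2*n+1. cos_coeff m * x^m) - cos x)"
    and "0 \<le> (-1)^n * ((\<Sum>m<2*n+2. sin_coeff m * x^m) - sin x)"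
proof -
  define C where "C n x = (-1)^n * ((\<Sum>m<2*n+1. cos_coeff m * x^m) - cos x)" for n x
  define S where "S n x = (-1)^n * ((\<Sum>m<2*n+2. sin_coeff m * x^m) - sin x)" for n x
  have nonneg_from_0: "0 \<le> f x"
    if "f 0 = 0" "\<And>y. (f has_real_derivative f' y) (at y)" "\<And>y. 0 \<le> y \<Longrightarrow> 0 \<le> f' y" "0 \<le> x"
    for f f' :: "real \<Rightarrow> real" and x
    using DERIV_nonneg_imp_nondecreasing[OF \<open>0 \<le> x\<close>, of f] that by metis
  have S_deriv: "(S n has_real_derivative C n y) (at y)" for n y
    using DERIV_cmult[OF DERIV_diff[OF has_real_derivative_power_sum[of sin_coeff "2*n+1"] DERIV_sin],
        of "(-1)^n"]
    by (simp add: S_def[abs_def] C_def diffs_sin_coeff)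
  have C_deriv: "(C (Suc n) has_real_derivative S n y) (at y)" for n y
    using DERIV_cmult[OF DERIV_diff[OF has_real_derivative_power_sum[of cos_coeff "2*n+2"] DERIV_cos],
        of "(-1)^Suc n"]
    by (simp add: S_def C_def[abs_def] diffs_cos_coeff sum_negf algebra_simps)
  have S_0: "S n 0 = 0" and C_0: "C n 0 = 0" for n
    by (simp_all add: S_def C_def lessThan_Suc_eq_insert_0 sum.reindex zero_power)
  have S_nonneg: "0 \<le> S n x" if "\<And>y. 0 \<le> y \<Longrightarrow> 0 \<le> C n y" "0 \<le> x" for n x
    using nonneg_from_0[OF S_0 S_deriv] that by blast
  have "0 \<le> C n x \<and> 0 \<le> S n x" if "0 \<le> x" for x
    using that
  proof (induction n arbitrary: x)
    case 0
    have "0 \<le> C 0 y" for y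
      by (simp add: C_def)
    then show ?case
      using S_nonneg 0 by blast
  next
    case (Suc n)
    have "0 \<le> C (Suc n) y" if "0 \<le> y" for y
      using nonneg_from_0[OF C_0 C_deriv] Suc.IH that by blast
    then show ?case
      using S_nonneg Suc.prems by blast
  qed
  then show "0 \<le> (-1)^n * ((\<Sum>m<2*n+1. cos_coeff m * x^m) - cos x)"
    and "0 \<le> (-1)^n * ((\<Sum>m<2*n+2. sin_coeff m * x^m) - sin x)"
    using assms by (simp_all add: C_def S_def)
qed

corollary taylor_5_le_diff_sin: "0 \<le> (x::real) \<Longrightarrow> x^3/6 - x^5/120 \<le> x - sin x"
  using sin_cos_alternating_taylor_bounds(2)[of x 2]
  by (simp add: sin_coeff_def lessThan_nat_numeral fact_numeral)

corollary diff_sin_le_taylor_7: "0 \<le> (x::real) \<Longrightarrow> x - sin x \<le> x^3/6 - x^5/120 + x^7/5040"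
  using sin_cos_alternating_taylor_bounds(2)[of x 3]
  by (simp add: sin_coeff_def lessThan_nat_numeral fact_numeral)

lemma sin_le_0_96:
  fixes k :: real
  assumes "8.2 \<le> k" "k \<le> 11.5"
  shows "sin k \<le> 0.96"
proof (cases "k \<le> 3*pi")
  case True
  have "sin k = sin (3*pi - k)"
    by (simp add: sin_diff)
  also have "\<dots> \<le> sin (5/4)"
    using True assms pi_approx by (intro sin_monotone_2pi_le) auto
  also have "\<dots> \<le> 5/4 - (5/4)^3/6 + (5/4)^5/120"
    using taylor_5_le_diff_sin[of "5/4"] by simp
  also have "\<dots> \<le> 0.96"
    by (simp add: power_divide)
  finally show ?thesis .
next
  case False
  have "sin (k - 2*pi) \<le> 0"
    using False assms pi_approx by (intro sin_le_zero) auto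
  then show ?thesis
    by (simp add: sin_diff)
qed

text \<open>Each polynomial inequality below is proved by expanding the difference of its two sides
  around a point at or near an end of the interval, where the signs of the coefficients settle
  the claim.\<close>

lemma beta_cubic_taylor:
  fixes k :: real
  assumes "0 \<le> k" "k \<le> 3.7"
  shows "k^3 \<le> 6 * (k^3/6 - k^5/120) * (1 + 7/40 * k^2)"
proof -
  have "k^2 \<le> 3.7^2"
    using assms by (intro power_mono) auto
  then have "k^2 \<le> 13.69"
    by (simp add: power2_eq_square)
  then have "0 \<le> k^5 * (7/40 - 1/20 - 7/800 * k^2)"
    using assms by (intro mult_nonneg_nonneg) auto
  moreover have "6 * (k^3/6 - k^5/120) * (1 + 7/40 * k^2) - k^3 = k^5 * (7/40 - 1/20 - 7/800 * k^2)"
    by algebra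
  ultimately show ?thesis
    by linarith
qed

lemma beta_cubic_1:
  fixes k :: real
  assumes "3.7 \<le> k" "k \<le> 8.2 \<or> 11.5 \<le> k"
  shows "k^3 \<le> 6 * (k - 1) * (1 + 7/40 * k^2)"
  using assms(2)
proof
  assume "k \<le> 8.2"
  define u where "u = 41/5 - k"
  have u: "0 \<le> u" "u \<le> 4.5"
    using assms(1) \<open>k \<le> 8.2\<close> by (auto simp: u_def)
  have "u^3 \<le> 4.5 * u^2"
    using mult_right_mono[OF u(2), of "u^2"] by (simp add: power3_eq_cube power2_eq_square)
  moreover have "u^2 \<le> 4.5 * u"
    using mult_right_mono[OF u(2) u(1)] by (simp add: power2_eq_square)
  moreover have "6 * (k - 1) * (1 + 7/40 * k^2) - k^3 = 104/625 + 567/500*u + 9/50*u^2 - 1/20*u^3"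
    unfolding u_def by algebra
  ultimately show ?thesis
    using u by linarith
next
  assume "11.5 \<le> k"
  define t where "t = k - 23/2"
  have "0 \<le> t"
    using \<open>11.5 \<le> k\<close> by (simp add: t_def)
  then have "0 \<le> 29/160 + 27/16*t + 27/40*t^2 + 1/20*t^3"
    by simp
  moreover have "6 * (k - 1) * (1 + 7/40 * k^2) - k^3 = 29/160 + 27/16*t + 27/40*t^2 + 1/20*t^3"
    unfolding t_def by algebra
  ultimately show ?thesis
    by linarith
qed

lemma beta_cubic_0_96:
  fixes k :: real
  assumes "8.2 \<le> k"
  shows "k^3 \<le> 6 * (k - 0.96) * (1 + 7/40 * k^2)"
proof -
  define w where "w = k - 9"
  have w: "- (4/5) \<le> w"
    using assms by (simp add: w_def)
  have "- (4/5) * w^2 \<le> w^3"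
    using mult_right_mono[OF w, of "w^2"] by (simp add: power3_eq_cube power2_eq_square)
  moreover have "6 * (k - 0.96) * (1 + 7/40 * k^2) - k^3 = 1521/500 + 3/500*w + 171/500*w^2 + 1/20*w^3"
    unfolding w_def by algebra
  ultimately show ?thesis
    using w zero_le_power2[of w] by linarith
qed

lemma alpha_cubic_taylor:
  fixes k :: real
  assumes "0 \<le> k" "k \<le> 4.6"
  shows "6 * (k^3/6 - k^5/120 + k^7/5040) * (1 + 1/20 * k^2) \<le> k^3"
proof -
  have "k^2 \<le> 4.6^2"
    using assms by (intro power_mono) auto
  then have "k^2 \<le> 21.16"
    by (simp add: power2_eq_square)
  then have "0 \<le> k^7 * (1/400 - 1/840 - 1/16800 * k^2)"
    using assms by (intro mult_nonneg_nonneg) auto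
  moreover have "k^3 - 6 * (k^3/6 - k^5/120 + k^7/5040) * (1 + 1/20 * k^2)
      = k^7 * (1/400 - 1/840 - 1/16800 * k^2)"
    by algebra
  ultimately show ?thesis
    by (metis diff_ge_0_iff_ge)
qed

lemma alpha_cubic_1:
  fixes k :: real
  assumes "4.6 \<le> k"
  shows "6 * (k + 1) * (1 + 1/20 * k^2) \<le> k^3"
proof -
  define t where "t = k - 23/5"
  have "0 \<le> t"
    using assms by (simp add: t_def)
  then have "0 \<le> 17617/625 + 8919/250*t + 234/25*t^2 + 7/10*t^3"
    by simp
  moreover have "k^3 - 6 * (k + 1) * (1 + 1/20 * k^2) = 17617/625 + 8919/250*t + 234/25*t^2 + 7/10*t^3"
    unfolding t_def by algebra
  ultimately show ?thesis
    by linarith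
qed

lemma cube_le_eta_hat_numerator:
  fixes k :: real
  assumes "0 < k"
  shows "k^3 \<le> 6 * (k - sin k) * (1 + 7/40 * k^2)"
proof -
  have via_lower: "k^3 \<le> 6 * (k - sin k) * (1 + 7/40 * k^2)"
    if "B \<le> k - sin k" "k^3 \<le> 6 * B * (1 + 7/40 * k^2)" for B
  proof -
    have "6 * B * (1 + 7/40 * k^2) \<le> 6 * (k - sin k) * (1 + 7/40 * k^2)"
      using that(1) by (intro mult_right_mono) auto
    with that(2) show ?thesis
      by linarith
  qed
  consider "k \<le> 3.7" | "3.7 \<le> k" "k \<le> 8.2 \<or> 11.5 \<le> k" | "8.2 \<le> k" "k \<le> 11.5"
    by linarith
  then show ?thesis
  proof cases
    case 1
    then show ?thesis
      using via_lower[OF taylor_5_le_diff_sin] beta_cubic_taylor assms by simp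
  next
    case 2
    then show ?thesis
      using via_lower[of "k - 1"] sin_le_one[of k] beta_cubic_1 by simp
  next
    case 3
    then show ?thesis
      using via_lower[of "k - 0.96"] sin_le_0_96 beta_cubic_0_96 by simp
  qed
qed

lemma eta_hat_numerator_le_cube:
  fixes k :: real
  assumes "0 < k"
  shows "6 * (k - sin k) * (1 + 1/20 * k^2) \<le> k^3"
proof -
  have via_upper: "6 * (k - sin k) * (1 + 1/20 * k^2) \<le> k^3"
    if "k - sin k \<le> B" "6 * B * (1 + 1/20 * k^2) \<le> k^3" for B
  proof -
    have "6 * (k - sin k) * (1 + 1/20 * k^2) \<le> 6 * B * (1 + 1/20 * k^2)"
      using that(1) by (intro mult_right_mono) auto
    with that(2) show ?thesis
      by linarith
  qed
  show ?thesis
  proof (cases "k \<le> 4.6")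
    case True
    then show ?thesis
      using via_upper[OF diff_sin_le_taylor_7] alpha_cubic_taylor assms by simp
  next
    case False
    then show ?thesis
      using via_upper[of "k + 1"] sin_ge_minus_one[of k] alpha_cubic_1 by simp
  qed
qed

definition eta_hat :: "real \<Rightarrow> real" where
  "eta_hat k = (if k = 0 then 1 else 6 * (k - sin k) / k^3)"

lemma eta_hat_minus: "eta_hat (- k) = eta_hat k"
  by (simp add: eta_hat_def minus_divide_left)

lemma eta_hat_bounds: "1 / (1 + 7/40 * k^2) \<le> eta_hat k \<and> eta_hat k \<le> 1 / (1 + 1/20 * k^2)"
proof -
  have pos: "1 / (1 + 7/40 * K^2) \<le> eta_hat K \<and> eta_hat K \<le> 1 / (1 + 1/20 * K^2)"
    if "0 < K" for K :: real
  proof -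
    have "0 < 1 + 7/40 * K^2" "0 < 1 + 1/20 * K^2" "0 < K^3"
      using that by (auto simp: add_pos_nonneg)
    then show ?thesis
      using that cube_le_eta_hat_numerator[OF that] eta_hat_numerator_le_cube[OF that]
      by (simp add: eta_hat_def divide_le_eq le_divide_eq mult.commute)
  qed
  consider "0 < k" | "k = 0" | "0 < - k"
    by linarith
  then show ?thesis
  proof cases
    case 1
    then show ?thesis
      by (rule pos)
  next
    case 2
    then show ?thesis
      by (simp add: eta_hat_def)
  next
    case 3
    then show ?thesis
      using pos[of "- k"] by (simp add: eta_hat_minus)
  qed
qed

lemma has_integral_field_antiderivative:
  fixes G g :: "'a :: {real_normed_field, banach} \<Rightarrow> 'a"
  assumes "a \<le> b" "\<And>z. (G has_field_derivative g z) (at z)"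
  shows "((\<lambda>x. g (of_real x)) has_integral (G (of_real b) - G (of_real a))) {a..b}"
  using fundamental_theorem_of_calculus[of a b "\<lambda>x. G (of_real x)" "\<lambda>x. g (of_real x)"] assms
    has_vector_derivative_real_field by blast

lemma fourier_eq_has_integral:
  fixes f :: "real \<Rightarrow> real"
  assumes "((\<lambda>x. exp (- \<i> * complex_of_real (k * x)) * complex_of_real (f x)) has_integral I) {a..b}"
    and "continuous_on {a..b} f" "\<And>x. x \<notin> {a..b} \<Longrightarrow> f x = 0"
  shows "fourier f k = I"
proof -
  let ?f = "\<lambda>x. exp (- \<i> * complex_of_real (k * x)) * complex_of_real (f x)"
  have "(\<lambda>x. indicator {a..b} x *\<^sub>R ?f x) = ?f"
    using assms(3) by (auto simp: indicator_def)
  moreover have "integrable lborel (\<lambda>x. indicator {a..b} x *\<^sub>R ?f x)"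
    by (intro borel_integrable_compact continuous_intros assms(2)) auto
  ultimately have "integrable lborel ?f"
    by simp
  then have "(?f has_integral fourier f k) UNIV"
    unfolding fourier_def by (rule has_integral_integral_lborel)
  moreover have "(\<lambda>x. if x \<in> {a..b} then ?f x else 0) = ?f"
    using assms(3) by auto
  then have "(?f has_integral I) UNIV"
    using has_integral_restrict_UNIV[of "{a..b}" ?f I] assms(1) by simp
  ultimately show ?thesis
    using has_integral_unique by blast
qed

lemma continuous_on_eta: "continuous_on {-1..1} eta"
proof -
  have "continuous_on {-1..1} (\<lambda>x::real. 3/2 * (1 - \<bar>x\<bar>)^2)"
    by (intro continuous_intros)
  then show ?thesis
    by (rule continuous_on_eq) (auto simp: eta_def)
qed

lemma eta_outside: "x \<notin> {-1..1} \<Longrightarrow> eta x = 0"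
  by (auto simp: eta_def)

lemma has_integral_exp_mul_eta:
  fixes c :: complex
  assumes c: "c \<noteq> 0"
  shows "((\<lambda>x. exp (c * of_real x) * of_real (eta x)) has_integral
          (3 * (exp c - exp (- c)) / c^3 - 6 / c^2)) {-1..1}"
proof -
  \<comment> \<open>With \<open>d = 1 / c\<close> the derivative checks are ring identities modulo \<open>c * d = 1\<close>.\<close>
  define d where "d = 1 / c"
  have cd: "c * d = 1"
    using c by (simp add: d_def)
  define G1 where "G1 z = exp (c*z) * (3/2*(1-z)^2*d + 3*(1-z)*d^2 + 3*d^3)" for z
  define G2 where "G2 z = exp (c*z) * (3/2*(1+z)^2*d - 3*(1+z)*d^2 + 3*d^3)" for z
  have G1_deriv: "(G1 has_field_derivative exp (c*z) * (3/2*(1-z)^2)) (at z)" for z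
    unfolding G1_def[abs_def] by (auto intro!: derivative_eq_intros) (use cd in algebra)
  have "((\<lambda>x. exp (c * of_real x) * (3/2*(1 - of_real x)^2)) has_integral (G1 1 - G1 0)) {0..1}"
    using has_integral_field_antiderivative[of 0 1 G1, OF _ G1_deriv] by simp
  then have right: "((\<lambda>x. exp (c * of_real x) * of_real (eta x)) has_integral (G1 1 - G1 0)) {0..1}"
    by (rule has_integral_eq[rotated]) (auto simp: eta_def)
  have G2_deriv: "(G2 has_field_derivative exp (c*z) * (3/2*(1+z)^2)) (at z)" for z
    unfolding G2_def[abs_def] by (auto intro!: derivative_eq_intros) (use cd in algebra)
  have "((\<lambda>x. exp (c * of_real x) * (3/2*(1 + of_real x)^2)) has_integral (G2 0 - G2 (-1))) {-1..0}"
    using has_integral_field_antiderivative[of "-1" 0 G2, OF _ G2_deriv] by simp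
  then have left: "((\<lambda>x. exp (c * of_real x) * of_real (eta x)) has_integral (G2 0 - G2 (-1))) {-1..0}"
    by (rule has_integral_eq[rotated]) (auto simp: eta_def)
  have "((\<lambda>x. exp (c * of_real x) * of_real (eta x)) has_integral ((G2 0 - G2 (-1)) + (G1 1 - G1 0))) {-1..1}"
    by (rule has_integral_combine[OF _ _ left right]) auto
  also have "(G2 0 - G2 (-1)) + (G1 1 - G1 0) = 3 * (exp c - exp (- c)) / c^3 - 6 / c^2"
    using c by (simp add: G1_def G2_def d_def field_simps exp_minus power2_eq_square power3_eq_cube)
  finally show ?thesis .
qed

lemma has_integral_eta: "(eta has_integral 1) {-1..1}"
proof -
  define G1 where "G1 x = - 1/2 * (1 - x)^3" for x :: real
  define G2 where "G2 x = 1/2 * (1 + x)^3" for x :: real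
  have G1_deriv: "(G1 has_field_derivative 3/2 * (1 - x)^2) (at x)" for x
    unfolding G1_def by (auto intro!: derivative_eq_intros simp: power2_eq_square)
  have "((\<lambda>x. 3/2 * (1 - x)^2) has_integral (G1 1 - G1 0)) {0..1}"
    using has_integral_field_antiderivative[of 0 1 G1, OF _ G1_deriv] by simp
  then have right: "(eta has_integral (G1 1 - G1 0)) {0..1}"
    by (rule has_integral_eq[rotated]) (auto simp: eta_def)
  have G2_deriv: "(G2 has_field_derivative 3/2 * (1 + x)^2) (at x)" for x
    unfolding G2_def by (auto intro!: derivative_eq_intros simp: power2_eq_square)
  have "((\<lambda>x. 3/2 * (1 + x)^2) has_integral (G2 0 - G2 (-1))) {-1..0}"
    using has_integral_field_antiderivative[of "-1" 0 G2, OF _ G2_deriv] by simp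
  then have left: "(eta has_integral (G2 0 - G2 (-1))) {-1..0}"
    by (rule has_integral_eq[rotated]) (auto simp: eta_def)
  from has_integral_combine[OF _ _ left right] show ?thesis
    by (simp add: G1_def G2_def)
qed

lemma fourier_eta: "fourier eta k = complex_of_real (eta_hat k)"
proof (cases "k = 0")
  case True
  have "((\<lambda>x. exp (- \<i> * complex_of_real (k * x)) * complex_of_real (eta x)) has_integral 1) {-1..1}"
    using has_integral_of_real[OF has_integral_eta] True by simp
  then have "fourier eta k = 1"
    by (rule fourier_eq_has_integral) (auto simp: continuous_on_eta eta_outside)
  then show ?thesis
    using True by (simp add: eta_hat_def)
next
  case False
  define c where "c = - \<i> * complex_of_real k"
  have "c \<noteq> 0"
    using False by (simp add: c_def)
  have "((\<lambda>x. exp (- \<i> * complex_of_real (k * x)) * complex_of_real (eta x)) has_integral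
      (3 * (exp c - exp (- c)) / c^3 - 6 / c^2)) {-1..1}"
    using has_integral_exp_mul_eta[OF \<open>c \<noteq> 0\<close>] by (simp add: c_def mult.assoc)
  then have "fourier eta k = 3 * (exp c - exp (- c)) / c^3 - 6 / c^2"
    by (rule fourier_eq_has_integral) (auto simp: continuous_on_eta eta_outside)
  also have "exp c - exp (- c) = - 2 * \<i> * complex_of_real (sin k)"
    using cis_conv_exp[of "- k"] cis_conv_exp[of k] by (simp add: c_def cis.ctr complex_eq_iff)
  also have "c^3 = \<i> * complex_of_real (k^3)"
    by (simp add: c_def power3_eq_cube complex_eq_iff)
  also have "c^2 = - complex_of_real (k^2)"
    by (simp add: c_def power2_eq_square complex_eq_iff)
  also have "3 * (- 2 * \<i> * complex_of_real (sin k)) / (\<i> * complex_of_real (k^3)) - 6 / (- complex_of_real (k^2))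
      = complex_of_real (6 * (k - sin k) / k^3)"
    using False by (simp add: field_simps power2_eq_square power3_eq_cube)
  finally show ?thesis
    using False by (simp add: eta_hat_def)
qed

theorem mainTheorem2:
  fixes k :: real
  defines "\<alpha> \<equiv> (1/20 :: real)" and "\<beta> \<equiv> (7/40 :: real)"
  shows "Im (fourier eta k) = 0
    \<and> 1 / (1 + \<beta> * k^2) \<le> Re (fourier eta k)
    \<and> Re (fourier eta k) \<le> 1 / (1 + \<alpha> * k^2)"
  using eta_hat_bounds[of k] by (simp add: fourier_eta \<alpha>_def \<beta>_def)

end
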